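(* For every $t\in I$, $\tau\in(0,T-t)$ and $x\in\mathbb{R}^n$, $Y(t,x)\subset\widetilde Y(\tau,t,x)+P$, where $\widetilde Y(\tau,t,x)=\bigcup_{u\in\mathcal{U}}\big(J(t,t+\tau,x,u)+V(t+\tau,x(t+\tau;t,x,u))\big)$.
   Context: Setting (MOC). Fix $T>0$, $I=[0,T]$, integers $n,m,p\ge1$, nonempty compact $U\subset\mathbb{R}^m$. $f:\mathbb{R}^n\times U\to\mathbb{R}^n$ continuous with $\|f(x_1,u)-f(x_2,u)\|\le K_f\|x_1-x_2\|$, $\|f(x,u)\|\le M_f$. $L:\mathbb{R}^n\times U\to\mathbb{R}^p$ continuous, bounded, Lipschitz in $x$ uniformly in $u$. Controls $\mathcal{U}$: bounded Lebesgue measurable $u:I\to U$. $x(s;t,x,u)$ solves $\dot x=f(x,u(s))$ on $[t,T]$, $x(t)=x$; $J(t,t',x,u)=\int_t^{t'}L(x(s;t,x,u),u(s))ds$; $Y(t,x)=\{J(t,T,x,u):u\in\mathcal{U}\}$. $P\subset\mathbb{R}^p$: closed convex pointed cone containing $0$ with nonempty interior; $\mathcal{E}(S,P)=\{y\in S:(y-P)\cap S=\{y\}\}$; $V(t,x)=\mathcal{E}(\mathrm{cl}\,Y(t,x),P)$. *)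

theory Defs
  imports "HOL-Analysis.Analysis"
begin

text \<open>Admissible controls: Lebesgue (Borel) measurable maps from I = [0,T] into U
  (boundedness is automatic since U is compact).\<close>
definition controls :: "real \<Rightarrow> ('m::euclidean_space) set \<Rightarrow> (real \<Rightarrow> 'm) set" where
  "controls T U = {u. (\<forall>s\<in>{0..T}. u s \<in> U) \<and> u \<in> borel_measurable (restrict_space lebesgue {0..T})}"

definition solves :: "real \<Rightarrow> ('n::euclidean_space \<Rightarrow> 'm \<Rightarrow> 'n) \<Rightarrow> real \<Rightarrow> 'n \<Rightarrow> (real \<Rightarrow> 'm) \<Rightarrow> (real \<Rightarrow> 'n) \<Rightarrow> bool" where
  "solves T f t x u y \<longleftrightarrow> continuous_on {t..T} y \<and>
     (\<lambda>r. f (y r) (u r)) integrable_on {t..T} \<and>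
     (\<forall>s\<in>{t..T}. y s = x + integral {t..s} (\<lambda>r. f (y r) (u r)))"

text \<open>The trajectory x(s;t,x,u) (extended by the constant x outside [t,T] to make it unique).\<close>
definition traj :: "real \<Rightarrow> ('n::euclidean_space \<Rightarrow> 'm \<Rightarrow> 'n) \<Rightarrow> real \<Rightarrow> 'n \<Rightarrow> (real \<Rightarrow> 'm) \<Rightarrow> real \<Rightarrow> 'n" where
  "traj T f t x u = (THE y. solves T f t x u y \<and> (\<forall>s. s \<notin> {t..T} \<longrightarrow> y s = x))"

definition cost :: "real \<Rightarrow> ('n::euclidean_space \<Rightarrow> 'm \<Rightarrow> 'n) \<Rightarrow> ('n \<Rightarrow> 'm \<Rightarrow> 'p::euclidean_space)
     \<Rightarrow> real \<Rightarrow> real \<Rightarrow> 'n \<Rightarrow> (real \<Rightarrow> 'm) \<Rightarrow> 'p" where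
  "cost T f L t t' x u = integral {t..t'} (\<lambda>s. L (traj T f t x u s) (u s))"

definition Yset :: "real \<Rightarrow> ('n::euclidean_space \<Rightarrow> 'm::euclidean_space \<Rightarrow> 'n) \<Rightarrow> ('n \<Rightarrow> 'm \<Rightarrow> 'p::euclidean_space)
     \<Rightarrow> 'm set \<Rightarrow> real \<Rightarrow> 'n \<Rightarrow> 'p set" where
  "Yset T f L U t x = {cost T f L t T x u | u. u \<in> controls T U}"

definition efficient :: "'p::euclidean_space set \<Rightarrow> 'p set \<Rightarrow> 'p set" where
  "efficient S P = {y \<in> S. ((\<lambda>q. y - q) ` P) \<inter> S = {y}}"

definition Vset :: "real \<Rightarrow> ('n::euclidean_space \<Rightarrow> 'm::euclidean_space \<Rightarrow> 'n) \<Rightarrow> ('n \<Rightarrow> 'm \<Rightarrow> 'p::euclidean_space)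
     \<Rightarrow> 'm set \<Rightarrow> 'p set \<Rightarrow> real \<Rightarrow> 'n \<Rightarrow> 'p set" where
  "Vset T f L U P t x = efficient (closure (Yset T f L U t x)) P"

definition Ytilde :: "real \<Rightarrow> ('n::euclidean_space \<Rightarrow> 'm::euclidean_space \<Rightarrow> 'n) \<Rightarrow> ('n \<Rightarrow> 'm \<Rightarrow> 'p::euclidean_space)
     \<Rightarrow> 'm set \<Rightarrow> 'p set \<Rightarrow> real \<Rightarrow> real \<Rightarrow> 'n \<Rightarrow> 'p set" where
  "Ytilde T f L U P \<tau> t x = (\<Union>u\<in>controls T U.
      (\<lambda>v. cost T f L t (t + \<tau>) x u + v) ` Vset T f L U P (t + \<tau>) (traj T f t x u (t + \<tau>)))"

end

theory Submission
  imports Defs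
begin

text \<open>
  The proof splits y at the intermediate time s0 = t + tau.  By the flow property of
  the state equation, y = J(t,s0,x,u) + y2 where y2 is the cost of the same control
  started at s0 from z = x(s0;t,x,u), so y2 lies in the compact set cl Y(s0,z).
  A compact set dominates each of its points by a P-efficient point e (for a closed
  convex pointed cone P), i.e. y2 - e \<in> P with e \<in> V(s0,z); hence
  y = (J(t,s0,x,u) + e) + (y2 - e) \<in> Y~(tau,t,x) + P.
\<close>


subsection \<open>Closed convex pointed cones and efficient points\<close>

lemma convex_cone_nonneg_sum:
  assumes "cone P" "convex P" "0 \<in> P" "finite S" "S \<subseteq> P" "\<And>v. v \<in> S \<Longrightarrow> c v \<ge> 0"
  shows "(\<Sum>v\<in>S. c v *\<^sub>R v) \<in> P"
  using assms(4-6)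
proof (induction S rule: finite_induct)
  case empty
  then show ?case using assms(3) by simp
next
  case (insert v S)
  have "c v *\<^sub>R v \<in> P" and "(\<Sum>w\<in>S. c w *\<^sub>R w) \<in> P"
    using insert assms(1) unfolding cone_def by auto
  then show ?case
    using insert.hyps assms(1,2) convex_cone[of P] by simp
qed

text \<open>A closed convex pointed cone admits a linear functional that is strictly positive on
  its nonzero elements: separate 0 from the convex hull of the unit vectors of the cone.\<close>
lemma pointed_cone_positive_functional:
  fixes P :: "'a::euclidean_space set"
  assumes "closed P" "convex P" "cone P" "0 \<in> P" "P \<inter> uminus ` P = {0}"
  shows "\<exists>w. \<forall>q\<in>P. q \<noteq> 0 \<longrightarrow> w \<bullet> q > 0"
proof -
  define H where "H = convex hull (P \<inter> sphere 0 1)"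
  have compact_H: "compact H"
    unfolding H_def using assms(1) by (simp add: closed_Int_compact compact_convex_hull)
  have "0 \<notin> H"
  proof
    assume "0 \<in> H"
    then obtain S c where S: "finite S" "S \<subseteq> P \<inter> sphere 0 1" "\<forall>v\<in>S. 0 \<le> c v"
      "sum c S = 1" "(\<Sum>v\<in>S. c v *\<^sub>R v) = 0"
      unfolding H_def convex_hull_explicit by auto
    obtain v0 where v0: "v0 \<in> S" "c v0 > 0"
      using S(3,4) by (metis less_eq_real_def sum.neutral zero_neq_one)
    have rest: "(\<Sum>v\<in>S - {v0}. c v *\<^sub>R v) \<in> P"
      using S by (intro convex_cone_nonneg_sum[OF assms(3,2,4)]) auto
    have "(\<Sum>v\<in>S. c v *\<^sub>R v) = c v0 *\<^sub>R v0 + (\<Sum>v\<in>S - {v0}. c v *\<^sub>R v)"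
      using S(1) v0(1) by (simp add: sum.remove)
    then have "- (c v0 *\<^sub>R v0) \<in> P" using rest S(5) by (simp add: add_eq_0_iff)
    moreover have "c v0 *\<^sub>R v0 \<in> P"
      using v0 S(2) assms(3) unfolding cone_def by auto
    ultimately have "c v0 *\<^sub>R v0 = 0"
      using assms(5) by (metis IntI image_eqI minus_minus singletonD)
    moreover have "norm v0 = 1" using v0 S(2) by auto
    ultimately show False using v0(2) by auto
  qed
  then obtain a b where ab: "0 < b" "\<forall>x\<in>H. b < a \<bullet> x"
    using separating_hyperplane_closed_0[of H] compact_H
    unfolding H_def by (auto simp: compact_imp_closed)
  have "0 < a \<bullet> q" if q: "q \<in> P" "q \<noteq> 0" for q
  proof -
    have "(1 / norm q) *\<^sub>R q \<in> H"
      using q assms(3) unfolding H_def cone_def by (intro hull_inc) auto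
    then have "0 < a \<bullet> ((1 / norm q) *\<^sub>R q)" using ab by force
    then show ?thesis using q by (simp add: zero_less_divide_iff)
  qed
  then show ?thesis by blast
qed

text \<open>The efficient point minimises the positive
  functional over the compact section of S below s.\<close>
lemma efficient_point_below:
  fixes P :: "'a::euclidean_space set"
  assumes "closed P" "convex P" "cone P" "0 \<in> P" "P \<inter> uminus ` P = {0}"
    and "compact S" "s \<in> S"
  shows "\<exists>e\<in>efficient S P. s - e \<in> P"
proof -
  obtain w where w: "\<And>q. q \<in> P \<Longrightarrow> q \<noteq> 0 \<Longrightarrow> w \<bullet> q > 0"
    using pointed_cone_positive_functional[OF assms(1-5)] by blast
  define C where "C = S \<inter> {e. s - e \<in> P}"
  have "closed ((\<lambda>e. s - e) -` P)"
    using assms(1) by (intro continuous_closed_vimage continuous_intros)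
  then have "closed {e. s - e \<in> P}" by (simp add: vimage_def)
  then have "compact C" unfolding C_def using assms(6) by (simp add: compact_Int_closed)
  moreover have "s \<in> C" unfolding C_def using assms(7,4) by simp
  moreover have "continuous_on C (\<lambda>y. w \<bullet> y)" by (intro continuous_intros)
  ultimately obtain e where e: "e \<in> C" "\<And>y. y \<in> C \<Longrightarrow> w \<bullet> e \<le> w \<bullet> y"
    using continuous_attains_inf[of C "\<lambda>y. w \<bullet> y"] by blast
  have "e' = e" if e': "e' \<in> S" "e' = e - q" "q \<in> P" for e' q
  proof -
    have "s - e' = (s - e) + q" using e' by simp
    also have "\<dots> \<in> P" using e(1) e'(3) assms(2,3) convex_cone[of P] unfolding C_def by auto
    finally have "w \<bullet> e \<le> w \<bullet> e'" using e(2) e'(1) unfolding C_def by auto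
    then have "w \<bullet> q \<le> 0" using e' by (simp add: inner_diff_right)
    then show ?thesis using w[OF e'(3)] e' by force
  qed
  moreover have "e \<in> S" using e unfolding C_def by auto
  ultimately have "e \<in> efficient S P"
    unfolding efficient_def using assms(4) by force
  then show ?thesis using e unfolding C_def by auto
qed


subsection \<open>Integrals along measurable controls\<close>

lemma control_composition_integrable:
  fixes g :: "'n::euclidean_space \<Rightarrow> 'm::euclidean_space \<Rightarrow> 'p::euclidean_space"
  assumes cont: "continuous_on (UNIV \<times> U) (\<lambda>(x, v). g x v)"
    and bnd: "\<And>x v. v \<in> U \<Longrightarrow> norm (g x v) \<le> M"
    and u: "u \<in> controls T U" and ab: "{a..b} \<subseteq> {0..T}"
    and y: "continuous_on {a..b} y"
  shows "(\<lambda>r. g (y r) (u r)) integrable_on {a..b}"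
proof -
  have um: "u \<in> borel_measurable (lebesgue_on {a..b})"
    using u ab unfolding controls_def by (auto intro: measurable_restrict_mono)
  have ym: "y \<in> borel_measurable (lebesgue_on {a..b})"
    by (rule continuous_imp_measurable_on_sets_lebesgue[OF y]) auto
  have pair_meas: "(\<lambda>r. (y r, u r)) \<in> lebesgue_on {a..b} \<rightarrow>\<^sub>M restrict_space borel (UNIV \<times> U)"
    using borel_measurable_Pair[OF ym um] u ab unfolding controls_def
    by (intro measurable_restrict_space2) auto
  have g_meas: "(\<lambda>(x, v). g x v) \<in> borel_measurable (restrict_space borel (UNIV \<times> U))"
    by (rule borel_measurable_continuous_on_restrict[OF cont])
  have meas: "(\<lambda>r. g (y r) (u r)) \<in> borel_measurable (lebesgue_on {a..b})"
    using measurable_comp[OF pair_meas g_meas] by (simp add: o_def)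
  have "integrable (lebesgue_on {a..b}) (\<lambda>r. g (y r) (u r))"
  proof (rule finite_measure.integrable_const_bound[where B=M])
    show "finite_measure (lebesgue_on {a..b})" by (rule finite_measure_lebesgue_on) auto
    show "AE r in lebesgue_on {a..b}. norm (g (y r) (u r)) \<le> M"
      using u ab unfolding controls_def by (auto intro!: bnd)
  qed (rule meas)
  then show ?thesis by (rule integrable_on_lebesgue_on) auto
qed

text \<open>A pointwise norm bound controls the integral, whether or not the integrand is
  integrable (a non-integrable function has integral 0).\<close>
lemma norm_integral_le_const:
  fixes g :: "real \<Rightarrow> 'a::euclidean_space"
  assumes "a \<le> b" "\<And>r. r \<in> {a..b} \<Longrightarrow> norm (g r) \<le> B"
  shows "norm (integral {a..b} g) \<le> B * (b - a)"
proof -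
  have B: "0 \<le> B" using order_trans[OF norm_ge_zero assms(2)[of a]] assms(1) by simp
  show ?thesis
  proof (cases "g integrable_on {a..b}")
    case True
    then show ?thesis
      using has_integral_bound_real[of B "{}" g "integral {a..b} g" a b] assms B
      by (simp add: integrable_integral content_real)
  next
    case False
    then show ?thesis using B assms(1) by (simp add: not_integrable_integral)
  qed
qed

lemma Yset_bounded:
  assumes L_bnd: "\<And>x v. v \<in> U \<Longrightarrow> norm (L x v) \<le> M_L"
    and s: "0 \<le> s" "s \<le> T"
  shows "bounded (Yset T f L U s x)"
proof -
  have "norm (cost T f L s T x u) \<le> M_L * (T - s)" if "u \<in> controls T U" for u
    unfolding cost_def
    using that s by (intro norm_integral_le_const L_bnd) (auto simp: controls_def)
  then show ?thesis unfolding bounded_iff Yset_def by blast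
qed


subsection \<open>Existence and uniqueness of trajectories\<close>

lemma solves_cong:
  assumes sol: "solves T f t0 x0 u y" and eq: "\<And>s. s \<in> {t0..T} \<Longrightarrow> y' s = y s"
  shows "solves T f t0 x0 u y'"
  unfolding solves_def
proof (intro conjI ballI)
  show "continuous_on {t0..T} y'"
    using sol eq unfolding solves_def by (metis continuous_on_cong)
  have "(\<lambda>r. f (y r) (u r)) integrable_on {t0..T}" using sol unfolding solves_def by simp
  then show "(\<lambda>r. f (y' r) (u r)) integrable_on {t0..T}" by (rule integrable_eq) (simp add: eq)
  fix s assume s: "s \<in> {t0..T}"
  have "integral {t0..s} (\<lambda>r. f (y' r) (u r)) = integral {t0..s} (\<lambda>r. f (y r) (u r))"
    using s eq by (intro integral_cong) auto
  then show "y' s = x0 + integral {t0..s} (\<lambda>r. f (y' r) (u r))"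
    using sol s eq unfolding solves_def by simp
qed

locale lipschitz_control_system =
  fixes T :: real and U :: "'m::euclidean_space set" and f :: "'n::euclidean_space \<Rightarrow> 'm \<Rightarrow> 'n"
    and K Mf :: real
  assumes f_cont: "continuous_on (UNIV \<times> U) (\<lambda>(x, v). f x v)"
    and f_lipschitz: "\<And>x1 x2 v. v \<in> U \<Longrightarrow> norm (f x1 v - f x2 v) \<le> K * norm (x1 - x2)"
    and K_nonneg: "K \<ge> 0"
    and f_bounded: "\<And>x v. v \<in> U \<Longrightarrow> norm (f x v) \<le> Mf"

lemma lipschitz_control_systemI:
  fixes f :: "'n::euclidean_space \<Rightarrow> 'm::euclidean_space \<Rightarrow> 'n"
  assumes "continuous_on (UNIV \<times> U) (\<lambda>(x, v). f x v)"
    and lip: "\<And>x1 x2 v. v \<in> U \<Longrightarrow> norm (f x1 v - f x2 v) \<le> K * norm (x1 - x2)"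
    and "\<And>x v. v \<in> U \<Longrightarrow> norm (f x v) \<le> Mf"
  shows "lipschitz_control_system U f \<bar>K\<bar> Mf"
proof
  fix x1 x2 :: 'n and v assume "v \<in> U"
  have "K * norm (x1 - x2) \<le> \<bar>K\<bar> * norm (x1 - x2)" by (intro mult_right_mono) auto
  then show "norm (f x1 v - f x2 v) \<le> \<bar>K\<bar> * norm (x1 - x2)"
    using lip[OF \<open>v \<in> U\<close>, of x1 x2] by linarith
qed (use assms in auto)

text \<open>Solutions on [t0,T] are the fixed
  points of the Picard operator, which becomes a contraction (constant 1/2) on bounded
  continuous functions once the state is rescaled by the weight exp(2K(s - t0)); the
  clamp to [t0,T] extends everything to the whole real line.\<close>
locale fixed_control_problem = lipschitz_control_system T U f K Mf
  for T :: real and U :: "'m::euclidean_space set" and f :: "'n::euclidean_space \<Rightarrow> 'm \<Rightarrow> 'n"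
    and K Mf :: real +
  fixes u :: "real \<Rightarrow> 'm" and t0 :: real and x0 :: 'n
  assumes u: "u \<in> controls T U"
    and t0: "0 \<le> t0" "t0 \<le> T"
begin

definition clamp :: "real \<Rightarrow> real" where "clamp s = max t0 (min T s)"
definition weight :: "real \<Rightarrow> real" where "weight s = exp (2 * K * (s - t0))"
definition scaled_field :: "(real \<Rightarrow> 'n) \<Rightarrow> real \<Rightarrow> 'n" where
  "scaled_field w r = f (weight r *\<^sub>R w r) (u r)"
definition picard :: "(real \<Rightarrow> 'n) \<Rightarrow> real \<Rightarrow> 'n" where
  "picard w s = (1 / weight (clamp s)) *\<^sub>R (x0 + integral {t0..clamp s} (scaled_field w))"
definition picard_op :: "(real \<Rightarrow>\<^sub>C 'n) \<Rightarrow> (real \<Rightarrow>\<^sub>C 'n)" where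
  "picard_op w = Bcontfun (picard (apply_bcontfun w))"

lemma clamp_in: "clamp s \<in> {t0..T}" using t0 by (auto simp: clamp_def)
lemma clamp_id: "s \<in> {t0..T} \<Longrightarrow> clamp s = s" by (auto simp: clamp_def)
lemma weight_pos: "weight s > 0" by (simp add: weight_def)
lemma weight_nonzero: "weight s \<noteq> 0" by (simp add: weight_def)
lemma weight_cont: "continuous_on S weight" unfolding weight_def by (intro continuous_intros)

lemma clamped_bcontfun:
  assumes "continuous_on {t0..T} G"
  shows "(\<lambda>s. G (clamp s)) \<in> bcontfun"
proof -
  have "continuous_on UNIV clamp" unfolding clamp_def by (intro continuous_intros)
  then have "continuous_on UNIV (\<lambda>s. G (clamp s))"
    by (rule continuous_on_compose2[OF assms]) (use clamp_in in blast)
  moreover have "bounded (G ` {t0..T})"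
    using assms by (intro compact_imp_bounded compact_continuous_image) auto
  then have "bounded (range (\<lambda>s. G (clamp s)))"
    by (rule bounded_subset) (auto intro!: imageI clamp_in)
  ultimately show ?thesis unfolding bcontfun_def by auto
qed

lemma scaled_field_integrable:
  assumes "continuous_on {t0..T} w" "s \<in> {t0..T}"
  shows "scaled_field w integrable_on {t0..s}"
proof -
  have "continuous_on {t0..s} w" using assms by (auto intro: continuous_on_subset)
  then have "continuous_on {t0..s} (\<lambda>r. weight r *\<^sub>R w r)"
    by (intro continuous_intros weight_cont)
  then show ?thesis unfolding scaled_field_def[abs_def]
    using control_composition_integrable[OF f_cont f_bounded u] assms(2) t0 by auto
qed

lemma picard_bcontfun:
  assumes "continuous_on {t0..T} w"
  shows "picard w \<in> bcontfun"
proof -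
  have "continuous_on {t0..T} (\<lambda>s. integral {t0..s} (scaled_field w))"
    using scaled_field_integrable[OF assms, of T] t0 by (intro indefinite_integral_continuous_1) auto
  then have "continuous_on {t0..T} (\<lambda>s. (1 / weight s) *\<^sub>R (x0 + integral {t0..s} (scaled_field w)))"
    using weight_pos by (intro continuous_intros weight_cont) (auto simp: less_imp_neq[symmetric])
  then show ?thesis unfolding picard_def[abs_def] by (rule clamped_bcontfun)
qed

lemma picard_op_apply: "apply_bcontfun (picard_op w) = picard (apply_bcontfun w)"
  unfolding picard_op_def by (rule Bcontfun_inverse[OF picard_bcontfun]) auto

lemma weight_integral:
  assumes "s \<in> {t0..T}"
  shows "((\<lambda>r. K * weight r) has_integral (weight s - 1) / 2) {t0..s}"
proof -
  have "((\<lambda>r. K * weight r) has_integral (weight s / 2 - weight t0 / 2)) {t0..s}"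
  proof (rule fundamental_theorem_of_calculus)
    show "t0 \<le> s" using assms by auto
    fix x assume "x \<in> {t0..s}"
    have "((\<lambda>r. weight r / 2) has_real_derivative K * weight x) (at x within {t0..s})"
      unfolding weight_def by (auto intro!: derivative_eq_intros)
    then show "((\<lambda>r. weight r / 2) has_vector_derivative K * weight x) (at x within {t0..s})"
      by (simp add: has_real_derivative_iff_has_vector_derivative)
  qed
  then show ?thesis by (simp add: weight_def diff_divide_distrib)
qed

lemma scaled_field_difference_bound:
  fixes w1 w2 :: "real \<Rightarrow>\<^sub>C 'n"
  assumes s: "s \<in> {t0..T}"
  shows "norm (integral {t0..s} (\<lambda>r. scaled_field w1 r - scaled_field w2 r))
           \<le> dist w1 w2 * ((weight s - 1) / 2)"
proof -
  define D where "D = dist w1 w2"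
  have D_int: "((\<lambda>r. D * (K * weight r)) has_integral D * ((weight s - 1) / 2)) {t0..s}"
    by (rule has_integral_mult_right[OF weight_integral[OF s]])
  have "norm (integral {t0..s} (\<lambda>r. scaled_field w1 r - scaled_field w2 r))
          \<le> integral {t0..s} (\<lambda>r. D * (K * weight r))"
  proof (rule integral_norm_bound_integral)
    show "(\<lambda>r. scaled_field w1 r - scaled_field w2 r) integrable_on {t0..s}"
      using s by (intro integrable_diff scaled_field_integrable) auto
    show "(\<lambda>r. D * (K * weight r)) integrable_on {t0..s}" using D_int by blast
    fix r assume r: "r \<in> {t0..s}"
    then have "u r \<in> U" using s t0 u unfolding controls_def by auto
    then have "norm (scaled_field w1 r - scaled_field w2 r)
                 \<le> K * norm (weight r *\<^sub>R w1 r - weight r *\<^sub>R w2 r)"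
      unfolding scaled_field_def by (rule f_lipschitz)
    also have "\<dots> = K * weight r * norm (w1 r - w2 r)"
      using weight_pos[of r] by (simp add: scaleR_diff_right[symmetric])
    also have "\<dots> \<le> K * weight r * D"
      unfolding D_def using dist_bounded[of w1 r w2] K_nonneg weight_pos[of r]
      by (intro mult_left_mono) (auto simp: dist_norm)
    finally show "norm (scaled_field w1 r - scaled_field w2 r) \<le> D * (K * weight r)"
      by (simp add: algebra_simps)
  qed
  also have "\<dots> = D * ((weight s - 1) / 2)" by (rule integral_unique[OF D_int])
  finally show ?thesis unfolding D_def .
qed

lemma picard_contraction: "dist (picard_op w1) (picard_op w2) \<le> 1/2 * dist w1 w2"
proof (rule dist_bound)
  fix s
  define s' where "s' = clamp s"
  have s': "s' \<in> {t0..T}" unfolding s'_def by (rule clamp_in)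
  have "dist (picard_op w1 s) (picard_op w2 s)
          = (1 / weight s') * norm (integral {t0..s'} (\<lambda>r. scaled_field w1 r - scaled_field w2 r))"
    using integral_diff[OF scaled_field_integrable scaled_field_integrable, OF _ s' _ s'] weight_pos[of s']
    unfolding picard_op_apply dist_norm picard_def s'_def[symmetric]
    by (simp add: scaleR_diff_right[symmetric])
  also have "\<dots> \<le> (1 / weight s') * (dist w1 w2 * ((weight s' - 1) / 2))"
    using scaled_field_difference_bound[OF s'] weight_pos[of s'] by (intro mult_left_mono) auto
  also have "\<dots> = dist w1 w2 / 2 - dist w1 w2 / (2 * weight s')"
    using weight_pos[of s'] by (simp add: field_simps)
  also have "\<dots> \<le> 1/2 * dist w1 w2" using weight_pos[of s'] by simp
  finally show "dist (picard_op w1 s) (picard_op w2 s) \<le> 1/2 * dist w1 w2" .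
qed

lemma picard_unique_fixpoint: "\<exists>!w. picard_op w = w"
  by (rule banach_fix_type[of "1/2"]) (auto intro!: picard_contraction[simplified])

lemma fixpoint_solves:
  assumes fixed: "picard_op w = w"
  shows "solves T f t0 x0 u (\<lambda>s. weight s *\<^sub>R apply_bcontfun w s)"
proof -
  define Y where "Y s = weight s *\<^sub>R apply_bcontfun w s" for s
  have field: "(\<lambda>r. f (Y r) (u r)) = scaled_field w" by (simp add: Y_def scaled_field_def fun_eq_iff)
  have "continuous_on {t0..T} Y" unfolding Y_def by (intro continuous_intros weight_cont) auto
  moreover have "(\<lambda>r. f (Y r) (u r)) integrable_on {t0..T}"
    unfolding field using t0 by (intro scaled_field_integrable) auto
  moreover have "Y s = x0 + integral {t0..s} (\<lambda>r. f (Y r) (u r))" if s: "s \<in> {t0..T}" for s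
  proof -
    have "apply_bcontfun w s = picard w s" using fixed picard_op_apply[of w] by simp
    then show ?thesis
      unfolding field picard_def clamp_id[OF s] using weight_pos[of s] by (simp add: Y_def)
  qed
  ultimately show ?thesis unfolding solves_def Y_def by blast
qed

lemma solution_fixpoint:
  assumes sol: "solves T f t0 x0 u y"
  defines "W \<equiv> (\<lambda>s. (1 / weight (clamp s)) *\<^sub>R y (clamp s))"
  shows "W \<in> bcontfun" "picard_op (Bcontfun W) = Bcontfun W"
proof -
  have "continuous_on {t0..T} (\<lambda>s. (1 / weight s) *\<^sub>R y s)"
    using sol weight_pos unfolding solves_def
    by (intro continuous_intros weight_cont) (auto simp: less_imp_neq[symmetric])
  then show W_bc: "W \<in> bcontfun" unfolding W_def by (rule clamped_bcontfun)
  have "picard W s = W s" for s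
  proof -
    define s' where "s' = clamp s"
    have s': "s' \<in> {t0..T}" unfolding s'_def by (rule clamp_in)
    have "integral {t0..s'} (scaled_field W) = integral {t0..s'} (\<lambda>r. f (y r) (u r))"
      using s' by (intro integral_cong) (simp add: scaled_field_def W_def clamp_id weight_nonzero)
    also have "x0 + \<dots> = y s'" using sol s' unfolding solves_def by auto
    finally show ?thesis unfolding picard_def W_def s'_def[symmetric] by simp
  qed
  then have "picard W = W" by (rule ext)
  then show "picard_op (Bcontfun W) = Bcontfun W"
    unfolding picard_op_def using Bcontfun_inverse[OF W_bc] by simp
qed

lemma solutions_agree:
  assumes "solves T f t0 x0 u y1" "solves T f t0 x0 u y2" "s \<in> {t0..T}"
  shows "y1 s = y2 s"
proof -
  define W1 where "W1 = (\<lambda>s. (1 / weight (clamp s)) *\<^sub>R y1 (clamp s))"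
  define W2 where "W2 = (\<lambda>s. (1 / weight (clamp s)) *\<^sub>R y2 (clamp s))"
  have "Bcontfun W1 = Bcontfun W2"
    using picard_unique_fixpoint solution_fixpoint[OF assms(1)] solution_fixpoint[OF assms(2)]
    unfolding W1_def W2_def by metis
  then have "W1 = W2"
    using Bcontfun_inject solution_fixpoint(1)[OF assms(1)] solution_fixpoint(1)[OF assms(2)]
    unfolding W1_def W2_def by blast
  then have "W1 s = W2 s" by simp
  then show ?thesis using clamp_id[OF assms(3)] weight_pos[of s] unfolding W1_def W2_def by simp
qed

lemma trajectory_exists_unique:
  "\<exists>!y. solves T f t0 x0 u y \<and> (\<forall>s. s \<notin> {t0..T} \<longrightarrow> y s = x0)"
proof (rule ex_ex1I)
  obtain w where "picard_op w = w" using picard_unique_fixpoint by blast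
  then have sol: "solves T f t0 x0 u (\<lambda>s. weight s *\<^sub>R apply_bcontfun w s)" by (rule fixpoint_solves)
  define Y where "Y s = (if s \<in> {t0..T} then weight s *\<^sub>R apply_bcontfun w s else x0)" for s
  have "solves T f t0 x0 u Y"
    using sol by (rule solves_cong) (simp add: Y_def)
  then show "\<exists>y. solves T f t0 x0 u y \<and> (\<forall>s. s \<notin> {t0..T} \<longrightarrow> y s = x0)"
    unfolding Y_def by auto
next
  fix y1 y2
  assume "solves T f t0 x0 u y1 \<and> (\<forall>s. s \<notin> {t0..T} \<longrightarrow> y1 s = x0)"
    and "solves T f t0 x0 u y2 \<and> (\<forall>s. s \<notin> {t0..T} \<longrightarrow> y2 s = x0)"
  then show "y1 = y2" using solutions_agree by (metis ext)
qed

lemma trajectory_solves: "solves T f t0 x0 u (traj T f t0 x0 u)"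
  using theI'[OF trajectory_exists_unique] unfolding traj_def by blast

end

context lipschitz_control_system
begin

lemma traj_solves:
  assumes "u \<in> controls T U" "0 \<le> t0" "t0 \<le> T"
  shows "solves T f t0 x0 u (traj T f t0 x0 u)"
proof -
  interpret fixed_control_problem T U f K Mf u t0 x0 by unfold_locales (use assms in auto)
  show ?thesis by (rule trajectory_solves)
qed

lemma traj_eq_solution:
  assumes "u \<in> controls T U" "0 \<le> t0" "solves T f t0 x0 u y" "s \<in> {t0..T}"
  shows "traj T f t0 x0 u s = y s"
proof -
  interpret fixed_control_problem T U f K Mf u t0 x0 by unfold_locales (use assms in auto)
  show ?thesis using solutions_agree[OF trajectory_solves assms(3,4)] .
qed

end


subsection \<open>Flow property and additivity of the cost\<close>

lemma solves_restart:
  assumes sol: "solves T f t x0 u y" and s0: "s0 \<in> {t..T}"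
  shows "solves T f s0 (y s0) u y"
  unfolding solves_def
proof (intro conjI ballI)
  have y_cont: "continuous_on {t..T} y" and field_int: "(\<lambda>r. f (y r) (u r)) integrable_on {t..T}"
    using sol unfolding solves_def by auto
  show "continuous_on {s0..T} y" using s0 by (intro continuous_on_subset[OF y_cont]) auto
  show "(\<lambda>r. f (y r) (u r)) integrable_on {s0..T}"
    using s0 by (intro integrable_on_subinterval[OF field_int]) auto
  fix s assume s: "s \<in> {s0..T}"
  have "(\<lambda>r. f (y r) (u r)) integrable_on {t..s}"
    using s s0 by (intro integrable_on_subinterval[OF field_int]) auto
  then have "integral {t..s} (\<lambda>r. f (y r) (u r))
               = integral {t..s0} (\<lambda>r. f (y r) (u r)) + integral {s0..s} (\<lambda>r. f (y r) (u r))"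
    using s s0 by (intro Henstock_Kurzweil_Integration.integral_combine[symmetric]) auto
  moreover have "y s = x0 + integral {t..s} (\<lambda>r. f (y r) (u r))"
    and "y s0 = x0 + integral {t..s0} (\<lambda>r. f (y r) (u r))"
    using sol s s0 unfolding solves_def by auto
  ultimately show "y s = y s0 + integral {s0..s} (\<lambda>r. f (y r) (u r))" by simp
qed

context lipschitz_control_system
begin

lemma traj_restart:
  assumes u: "u \<in> controls T U" and times: "0 \<le> t" "t \<le> s0" "s0 \<le> T" and s: "s \<in> {s0..T}"
  shows "traj T f s0 (traj T f t x0 u s0) u s = traj T f t x0 u s"
proof -
  have "solves T f t x0 u (traj T f t x0 u)" using times by (intro traj_solves[OF u]) auto
  then have "solves T f s0 (traj T f t x0 u s0) u (traj T f t x0 u)"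
    by (rule solves_restart) (use times in auto)
  then show ?thesis using times s by (intro traj_eq_solution[OF u]) auto
qed

lemma cost_split:
  fixes L :: "'n \<Rightarrow> 'm \<Rightarrow> 'p::euclidean_space"
  assumes L_cont: "continuous_on (UNIV \<times> U) (\<lambda>(x, v). L x v)"
    and L_bnd: "\<And>x v. v \<in> U \<Longrightarrow> norm (L x v) \<le> M_L"
    and u: "u \<in> controls T U" and times: "0 \<le> t" "t \<le> s0" "s0 \<le> T"
  shows "cost T f L t T x0 u = cost T f L t s0 x0 u + cost T f L s0 T (traj T f t x0 u s0) u"
proof -
  let ?y = "traj T f t x0 u"
  have "continuous_on {t..T} ?y" using traj_solves[OF u] times unfolding solves_def by auto
  then have "(\<lambda>r. L (?y r) (u r)) integrable_on {t..T}"
    using times by (intro control_composition_integrable[OF L_cont L_bnd u]) auto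
  then have "integral {t..T} (\<lambda>r. L (?y r) (u r))
               = integral {t..s0} (\<lambda>r. L (?y r) (u r)) + integral {s0..T} (\<lambda>r. L (?y r) (u r))"
    using times by (intro Henstock_Kurzweil_Integration.integral_combine[symmetric]) auto
  moreover have "integral {s0..T} (\<lambda>r. L (?y r) (u r))
                   = integral {s0..T} (\<lambda>r. L (traj T f s0 (?y s0) u r) (u r))"
    using traj_restart[OF u times] by (intro integral_cong) simp
  ultimately show ?thesis unfolding cost_def by simp
qed

end


theorem lemma5p3:
  fixes T Kf Mf K_L M_L :: real
    and U :: "(real ^ 'm) set"
    and f :: "real ^ 'n \<Rightarrow> real ^ 'm \<Rightarrow> real ^ 'n"
    and L :: "real ^ 'n \<Rightarrow> real ^ 'm \<Rightarrow> real ^ 'p"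
    and P :: "(real ^ 'p) set"
  assumes "T > 0"
    and "U \<noteq> {}" and "compact U"
    and "continuous_on (UNIV \<times> U) (\<lambda>(x, v). f x v)"
    and "\<And>x1 x2 v. v \<in> U \<Longrightarrow> norm (f x1 v - f x2 v) \<le> Kf * norm (x1 - x2)"
    and "\<And>x v. v \<in> U \<Longrightarrow> norm (f x v) \<le> Mf"
    and "continuous_on (UNIV \<times> U) (\<lambda>(x, v). L x v)"
    and "\<And>x v. v \<in> U \<Longrightarrow> norm (L x v) \<le> M_L"
    and "\<And>x1 x2 v. v \<in> U \<Longrightarrow> norm (L x1 v - L x2 v) \<le> K_L * norm (x1 - x2)"
    and "closed P" and "convex P" and "cone P" and "0 \<in> P"
    and "P \<inter> uminus ` P = {0}"
    and "interior P \<noteq> {}"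
    and "t \<in> {0..T}" and "\<tau> \<in> {0<..<T - t}"
  shows "Yset T f L U t x \<subseteq>
           {a + q | a q. a \<in> Ytilde T f L U P \<tau> t x \<and> q \<in> P}"
proof
  fix y assume "y \<in> Yset T f L U t x"
  then obtain u where u: "u \<in> controls T U" and y: "y = cost T f L t T x u"
    unfolding Yset_def by auto
  interpret lipschitz_control_system T U f "\<bar>Kf\<bar>" Mf
    using assms(4-6) by (rule lipschitz_control_systemI)
  define s0 where "s0 = t + \<tau>"
  define z where "z = traj T f t x u s0"
  have times: "0 \<le> t" "t \<le> s0" "s0 \<le> T" using assms(16,17) unfolding s0_def by auto
  define y2 where "y2 = cost T f L s0 T z u"
  have y_split: "y = cost T f L t s0 x u + y2"
    unfolding y y2_def z_def by (rule cost_split[OF assms(7,8) u times])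
  have "y2 \<in> closure (Yset T f L U s0 z)"
    unfolding y2_def Yset_def using u by (auto intro: closure_subset[THEN subsetD])
  moreover have "compact (closure (Yset T f L U s0 z))"
    unfolding compact_closure using times by (intro Yset_bounded[where M_L = M_L] assms(8)) auto
  ultimately obtain e where e: "e \<in> Vset T f L U P s0 z" "y2 - e \<in> P"
    using efficient_point_below[OF assms(10-14)] unfolding Vset_def by blast
  have "cost T f L t s0 x u + e \<in> Ytilde T f L U P \<tau> t x"
    unfolding Ytilde_def using u e(1) by (auto simp: s0_def z_def)
  moreover have "y = (cost T f L t s0 x u + e) + (y2 - e)" using y_split by simp
  ultimately show "y \<in> {a + q | a q. a \<in> Ytilde T f L U P \<tau> t x \<and> q \<in> P}"
    using e(2) by blast
qed

end
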